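(* Let $\lambda\in(0,r^\alpha)$ and consider the $\lambda$-NRW on the augmented tree. Then for every $f\in\mathcal D_X$, the trace function $\mathrm{Tr}f$ is continuous on $K$.
   Context: Let $\{S_i\}_{i=1}^N$ ($N\ge2$) be contractive similitudes of $\mathbb R^d$ with ratios $r_i\in(0,1)$ satisfying the open set condition; $K$ the self-similar set, $\alpha$ its Hausdorff dimension, $r=\min r_i$. $\Sigma^*$ finite words with empty word $\vartheta$, $S_{\mathbf x}=S_{i_1}\circ\cdots\circ S_{i_k}$, $r_{\mathbf x}=r_{i_1}\cdots r_{i_k}$. $\mathcal J_0=\{\vartheta\}$, $\mathcal J_n=\{i_1\cdots i_k:r_{i_1\cdots i_k}\le r^n<r_{i_1\cdots i_{k-1}}\}$, $X=\bigcup_n\mathcal J_n$, $|\mathbf x|=n$ on $\mathcal J_n$, parent $\mathbf x^-$ the prefix in $\mathcal J_{n-1}$. Edges: $\{\mathbf x,\mathbf x^-\}$ and horizontal $\{\mathbf x,\mathbf y\}$ ($\mathbf x\ne\mathbf y\in\mathcal J_n$, $\inf_{\xi,\eta\in K}|S_{\mathbf x}(\xi)-S_{\mathbf y}(\eta)|\le\gamma r^n$). Geodesic ray: $(\mathbf x_n)$, $\mathbf x_n\in\mathcal J_n$, each a prefix of the next, converging to $\xi$ if $\xi\in S_{\mathbf x_n}(K)$ for all $n$. $\lambda$-NRW conductances: $c(\mathbf x,\mathbf x^-)=r_{\mathbf x}^\alpha\lambda^{-|\mathbf x|}$, $c(\mathbf x,\mathbf y)\asymp r_{\mathbf x}^\alpha\lambda^{-|\mathbf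 x|}$ on horizontal edges. $\mathcal E_X[f]=\frac12\sum_{\mathbf x\sim\mathbf y}c(\mathbf x,\mathbf y)(f(\mathbf x)-f(\mathbf y))^2$, $\mathcal D_X=\{f:\mathcal E_X[f]<\infty\}$. For $\lambda\in(0,r^\alpha)$ and $f\in\mathcal D_X$, $\mathrm{Tr}f(\xi)=\lim_nf(\mathbf x_n)$ for any geodesic ray $(\mathbf x_n)$ converging to $\xi$; this limit exists and does not depend on the ray. *)

theory Defs
  imports "HOL-Analysis.Analysis" "HOL-Library.Sublist"
begin

definition hausdorff_pre :: "real \<Rightarrow> real \<Rightarrow> 'a::metric_space set \<Rightarrow> ennreal" where
  "hausdorff_pre s \<delta> E =
     (INF U \<in> {U :: nat \<Rightarrow> 'a set. E \<subseteq> (\<Union>i. U i) \<and> (\<forall>i. bounded (U i) \<and> diameter (U i) \<le> \<delta>)}.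
        (\<Sum>i. ennreal (diameter (U i) powr s)))"

definition hausdorff_measure :: "real \<Rightarrow> 'a::metric_space set \<Rightarrow> ennreal" where
  "hausdorff_measure s E = (SUP \<delta> \<in> {0<..}. hausdorff_pre s \<delta> E)"

definition hausdorff_dim :: "'a::metric_space set \<Rightarrow> real" where
  "hausdorff_dim E = Inf {s. s > 0 \<and> hausdorff_measure s E = 0}"

definition similitude :: "('a::metric_space \<Rightarrow> 'a) \<Rightarrow> real \<Rightarrow> bool" where
  "similitude T c \<longleftrightarrow> (\<forall>x y. dist (T x) (T y) = c * dist x y)"

definition open_set_condition :: "nat \<Rightarrow> (nat \<Rightarrow> 'a::topological_space \<Rightarrow> 'a) \<Rightarrow> bool" where
  "open_set_condition N S \<longleftrightarrow>
     (\<exists>U. open U \<and> U \<noteq> {} \<and> (\<forall>i<N. S i ` U \<subseteq> U) \<and>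
          (\<forall>i<N. \<forall>j<N. i \<noteq> j \<longrightarrow> S i ` U \<inter> S j ` U = {}))"

definition self_similar_set :: "nat \<Rightarrow> (nat \<Rightarrow> 'a::metric_space \<Rightarrow> 'a) \<Rightarrow> 'a set \<Rightarrow> bool" where
  "self_similar_set N S K \<longleftrightarrow> compact K \<and> K \<noteq> {} \<and> K = (\<Union>i<N. S i ` K)"

definition rw :: "(nat \<Rightarrow> real) \<Rightarrow> nat list \<Rightarrow> real" where
  "rw r x = prod_list (map r x)"

definition Sw :: "(nat \<Rightarrow> 'a \<Rightarrow> 'a) \<Rightarrow> nat list \<Rightarrow> 'a \<Rightarrow> 'a" where
  "Sw S x = foldr (\<lambda>i g. S i \<circ> g) x id"

definition rmin :: "nat \<Rightarrow> (nat \<Rightarrow> real) \<Rightarrow> real" where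
  "rmin N r = Min (r ` {..<N})"

definition Jlev :: "nat \<Rightarrow> (nat \<Rightarrow> real) \<Rightarrow> nat \<Rightarrow> nat list set" where
  "Jlev N r n = (if n = 0 then {[]} else
     {x. set x \<subseteq> {..<N} \<and> x \<noteq> [] \<and> rw r x \<le> rmin N r ^ n \<and> rmin N r ^ n < rw r (butlast x)})"

definition level :: "nat \<Rightarrow> (nat \<Rightarrow> real) \<Rightarrow> nat list \<Rightarrow> nat" where
  "level N r x = (LEAST n. x \<in> Jlev N r n)"

definition vedge :: "nat \<Rightarrow> (nat \<Rightarrow> real) \<Rightarrow> nat list \<Rightarrow> nat list \<Rightarrow> bool" where
  "vedge N r x y \<longleftrightarrow> (\<exists>n\<ge>1. x \<in> Jlev N r n \<and> y \<in> Jlev N r (n - 1) \<and> prefix y x)"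

definition hedge :: "nat \<Rightarrow> (nat \<Rightarrow> real) \<Rightarrow> (nat \<Rightarrow> 'a::metric_space \<Rightarrow> 'a) \<Rightarrow> 'a set \<Rightarrow> real
    \<Rightarrow> nat list \<Rightarrow> nat list \<Rightarrow> bool" where
  "hedge N r S K \<gamma> x y \<longleftrightarrow>
     (\<exists>n. x \<in> Jlev N r n \<and> y \<in> Jlev N r n \<and> x \<noteq> y \<and>
          (INF p \<in> K \<times> K. dist (Sw S x (fst p)) (Sw S y (snd p))) \<le> \<gamma> * rmin N r ^ n)"

definition adj :: "nat \<Rightarrow> (nat \<Rightarrow> real) \<Rightarrow> (nat \<Rightarrow> 'a::metric_space \<Rightarrow> 'a) \<Rightarrow> 'a set \<Rightarrow> real
    \<Rightarrow> nat list \<Rightarrow> nat list \<Rightarrow> bool" where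
  "adj N r S K \<gamma> x y \<longleftrightarrow> vedge N r x y \<or> vedge N r y x \<or> hedge N r S K \<gamma> x y"

definition base_cond :: "nat \<Rightarrow> (nat \<Rightarrow> real) \<Rightarrow> real \<Rightarrow> real \<Rightarrow> nat list \<Rightarrow> real" where
  "base_cond N r \<alpha> lam x = rw r x powr \<alpha> / lam ^ level N r x"

definition cond :: "nat \<Rightarrow> (nat \<Rightarrow> real) \<Rightarrow> (nat \<Rightarrow> 'a::metric_space \<Rightarrow> 'a) \<Rightarrow> 'a set \<Rightarrow> real
    \<Rightarrow> real \<Rightarrow> real \<Rightarrow> (nat list \<Rightarrow> nat list \<Rightarrow> real) \<Rightarrow> nat list \<Rightarrow> nat list \<Rightarrow> real" where
  "cond N r S K \<gamma> \<alpha> lam h x y =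
     (if vedge N r x y then base_cond N r \<alpha> lam x
      else if vedge N r y x then base_cond N r \<alpha> lam y
      else if hedge N r S K \<gamma> x y then h x y else 0)"

definition admissible_hcond :: "nat \<Rightarrow> (nat \<Rightarrow> real) \<Rightarrow> (nat \<Rightarrow> 'a::metric_space \<Rightarrow> 'a) \<Rightarrow> 'a set
    \<Rightarrow> real \<Rightarrow> real \<Rightarrow> real \<Rightarrow> (nat list \<Rightarrow> nat list \<Rightarrow> real) \<Rightarrow> bool" where
  "admissible_hcond N r S K \<gamma> \<alpha> lam h \<longleftrightarrow>
     (\<exists>C>0. \<forall>x y. hedge N r S K \<gamma> x y \<longrightarrow>
        h x y = h y x \<and> base_cond N r \<alpha> lam x / C \<le> h x y \<and> h x y \<le> C * base_cond N r \<alpha> lam x)"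

definition energy :: "nat \<Rightarrow> (nat \<Rightarrow> real) \<Rightarrow> (nat \<Rightarrow> 'a::metric_space \<Rightarrow> 'a) \<Rightarrow> 'a set \<Rightarrow> real
    \<Rightarrow> real \<Rightarrow> real \<Rightarrow> (nat list \<Rightarrow> nat list \<Rightarrow> real) \<Rightarrow> (nat list \<Rightarrow> real) \<Rightarrow> ennreal" where
  "energy N r S K \<gamma> \<alpha> lam h f =
     ennreal (1/2) * (\<Sum>\<^sub>\<infinity>(x, y) \<in> {(x, y). adj N r S K \<gamma> x y}.
        ennreal (cond N r S K \<gamma> \<alpha> lam h x y * (f x - f y)^2))"

definition geodesic_ray :: "nat \<Rightarrow> (nat \<Rightarrow> real) \<Rightarrow> (nat \<Rightarrow> 'a \<Rightarrow> 'a) \<Rightarrow> 'a set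
    \<Rightarrow> (nat \<Rightarrow> nat list) \<Rightarrow> 'a \<Rightarrow> bool" where
  "geodesic_ray N r S K xs \<xi> \<longleftrightarrow>
     (\<forall>n. xs n \<in> Jlev N r n \<and> prefix (xs n) (xs (Suc n)) \<and> \<xi> \<in> Sw S (xs n) ` K)"

definition trace :: "nat \<Rightarrow> (nat \<Rightarrow> real) \<Rightarrow> (nat \<Rightarrow> 'a \<Rightarrow> 'a) \<Rightarrow> 'a set
    \<Rightarrow> (nat list \<Rightarrow> real) \<Rightarrow> 'a \<Rightarrow> real" where
  "trace N r S K f \<xi> = lim (\<lambda>n. f ((SOME xs. geodesic_ray N r S K xs \<xi>) n))"

end

theory Submission
  imports Defs
begin

text \<open>
  A vertex of level \<open>n\<close> has conductance at least a constant times \<open>(r\<^sup>\<alpha>/\<lambda>)\<^sup>n\<close> to each of its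
  neighbours, and \<open>r\<^sup>\<alpha>/\<lambda> > 1\<close>. Since a single edge carries at most the whole (finite) energy,
  the increment of \<open>f\<close> across an edge of level \<open>n\<close> is \<open>O(s\<^sup>n)\<close> with \<open>s = (\<lambda>/r\<^sup>\<alpha>)\<^sup>1\<^sup>/\<^sup>2 < 1\<close>.
  Summing along a geodesic ray, \<open>Tr f(\<xi>)\<close> is within \<open>O(s\<^sup>n)\<close> of \<open>f\<close> at the level-\<open>n\<close> vertex of the
  ray; and if \<open>|\<xi> - \<eta>| \<le> \<gamma> r\<^sup>n\<close> the level-\<open>n\<close> vertices of rays to \<open>\<xi>\<close> and \<open>\<eta>\<close> coincide or are joined
  by a horizontal edge. Hence \<open>Tr f\<close> is even uniformly continuous.
\<close>

lemma geometric_increments_limit: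
  fixes a :: "nat \<Rightarrow> real"
  assumes increments: "\<And>n. \<bar>a (Suc n) - a n\<bar> \<le> B * s ^ n" and "0 \<le> s" "s < 1"
  shows "convergent a" "\<bar>lim a - a n\<bar> \<le> B * s ^ n / (1 - s)"
proof -
  define d where "d k = a (Suc k) - a k" for k
  have "summable (\<lambda>k. B * s ^ k)"
    using assms by (intro summable_mult summable_geometric) simp
  then have abs_d: "summable (\<lambda>k. \<bar>d k\<bar>)"
    by (rule summable_comparison_test[rotated]) (use increments in \<open>auto simp: d_def\<close>)
  then have d: "summable d"
    using summable_rabs_cancel by blast
  have partial: "a n = a 0 + (\<Sum>k<n. d k)" for n
    by (simp add: d_def sum_lessThan_telescope)
  have "(\<lambda>n. a 0 + (\<Sum>k<n. d k)) \<longlonglongrightarrow> a 0 + suminf d"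
    by (intro tendsto_add tendsto_const summable_LIMSEQ[OF d])
  then have lim: "a \<longlonglongrightarrow> a 0 + suminf d"
    by (simp flip: partial)
  then show "convergent a"
    by (rule convergentI)
  have tail: "lim a - a n = (\<Sum>k. d (k + n))"
    using limI[OF lim] partial[of n] suminf_minus_initial_segment[OF d] by simp
  have abs_tail: "summable (\<lambda>k. \<bar>d (k + n)\<bar>)"
    using summable_ignore_initial_segment[OF abs_d] by simp
  have "\<bar>\<Sum>k. d (k + n)\<bar> \<le> (\<Sum>k. \<bar>d (k + n)\<bar>)"
    by (rule summable_rabs[OF abs_tail])
  also have "\<dots> \<le> (\<Sum>k. B * s ^ n * s ^ k)"
    using assms increments[of "_ + n"]
    by (intro suminf_le abs_tail summable_mult summable_geometric)
       (simp_all add: d_def power_add mult_ac)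
  also have "\<dots> = B * s ^ n / (1 - s)"
    using suminf_mult[OF summable_geometric[of s]] suminf_geometric[of s] assms by simp
  finally show "\<bar>lim a - a n\<bar> \<le> B * s ^ n / (1 - s)"
    using tail by simp
qed

lemma uniformly_continuous_on_if_approximable:
  fixes g :: "'a::metric_space \<Rightarrow> real"
  assumes "\<epsilon> \<longlonglongrightarrow> 0" "\<And>n. 0 < \<delta> n" "0 \<le> M"
    and approx: "\<And>n x. x \<in> A \<Longrightarrow> \<bar>g x - F n x\<bar> \<le> M * \<epsilon> n"
    and close: "\<And>n x y. x \<in> A \<Longrightarrow> y \<in> A \<Longrightarrow> dist x y < \<delta> n \<Longrightarrow> \<bar>F n x - F n y\<bar> \<le> \<epsilon> n"
  shows "uniformly_continuous_on A g"
  unfolding uniformly_continuous_on_def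
proof (intro allI impI)
  fix e :: real
  assume "e > 0"
  have "\<forall>\<^sub>F n in sequentially. \<epsilon> n < e / (2 * M + 1)"
    by (rule order_tendstoD(2)[OF assms(1)]) (simp add: \<open>e > 0\<close> \<open>0 \<le> M\<close> add_nonneg_pos)
  then obtain n where n: "\<epsilon> n < e / (2 * M + 1)"
    by (auto simp: eventually_sequentially)
  have "\<forall>x\<in>A. \<forall>y\<in>A. dist y x < \<delta> n \<longrightarrow> dist (g y) (g x) < e"
  proof (intro ballI impI)
    fix x y
    assume "x \<in> A" "y \<in> A" "dist y x < \<delta> n"
    then have "\<bar>g y - g x\<bar> \<le> (2 * M + 1) * \<epsilon> n"
      using approx[of x n] approx[of y n] close[of y x n] by (simp add: algebra_simps)
    also have "\<dots> < e"
      using n \<open>0 \<le> M\<close> by (simp add: pos_less_divide_eq mult.commute add_nonneg_pos)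
    finally show "dist (g y) (g x) < e"
      by (simp add: dist_real_def)
  qed
  with assms(2) show "\<exists>d>0. \<forall>x\<in>A. \<forall>y\<in>A. dist y x < d \<longrightarrow> dist (g y) (g x) < e"
    by blast
qed

lemma edge_energy_le:
  assumes "adj N r S K \<gamma> x y" "energy N r S K \<gamma> \<alpha> lam h f < \<infinity>"
  shows "cond N r S K \<gamma> \<alpha> lam h x y * (f x - f y)^2 \<le> 2 * enn2real (energy N r S K \<gamma> \<alpha> lam h f)"
proof -
  define t where "t = cond N r S K \<gamma> \<alpha> lam h x y * (f x - f y)^2"
  define g where "g = (\<lambda>(x, y). ennreal (cond N r S K \<gamma> \<alpha> lam h x y * (f x - f y)^2))"
  have energy: "energy N r S K \<gamma> \<alpha> lam h f = ennreal (1/2) * infsum g {(x, y). adj N r S K \<gamma> x y}"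
    by (simp add: energy_def g_def)
  show ?thesis
  proof (cases "t \<ge> 0")
    case False
    then show ?thesis
      using enn2real_nonneg[of "energy N r S K \<gamma> \<alpha> lam h f"] unfolding t_def by linarith
  next
    case True
    have "ennreal t = infsum g {(x, y)}"
      by (simp add: g_def t_def)
    also have "\<dots> \<le> infsum g {(x, y). adj N r S K \<gamma> x y}"
      using assms(1) by (intro infsum_mono_neutral) (auto intro: nonneg_summable_on_complete)
    finally have "ennreal (1/2) * ennreal t \<le> energy N r S K \<gamma> \<alpha> lam h f"
      unfolding energy by (rule mult_left_mono) simp
    then have "ennreal (1/2 * t) \<le> energy N r S K \<gamma> \<alpha> lam h f"
      by (subst ennreal_mult') simp_all
    then have "enn2real (ennreal (1/2 * t)) \<le> enn2real (energy N r S K \<gamma> \<alpha> lam h f)"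
      using assms(2) by (intro enn2real_mono) auto
    then show ?thesis
      using True by (simp add: t_def)
  qed
qed

lemma increment_le_sqrt_energy:
  assumes "adj N r S K \<gamma> x y" "energy N r S K \<gamma> \<alpha> lam h f < \<infinity>"
    and "0 < c" "c \<le> cond N r S K \<gamma> \<alpha> lam h x y"
  shows "\<bar>f x - f y\<bar> \<le> sqrt (2 * enn2real (energy N r S K \<gamma> \<alpha> lam h f) / c)"
proof -
  have "c * (f x - f y)^2 \<le> cond N r S K \<gamma> \<alpha> lam h x y * (f x - f y)^2"
    using assms(4) by (intro mult_right_mono) auto
  also have "\<dots> \<le> 2 * enn2real (energy N r S K \<gamma> \<alpha> lam h f)"
    by (rule edge_energy_le[OF assms(1,2)])
  finally have "(f x - f y)^2 \<le> 2 * enn2real (energy N r S K \<gamma> \<alpha> lam h f) / c"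
    using assms(3) by (simp add: field_simps)
  then show ?thesis
    using real_sqrt_le_mono by fastforce
qed

lemma Sw_foldr: "foldr (\<lambda>i g. S i \<circ> g) w g = Sw S w \<circ> g"
  by (induction w arbitrary: g) (auto simp: Sw_def comp_assoc)

lemma Sw_snoc: "Sw S (w @ [i]) = Sw S w \<circ> S i"
  using Sw_foldr[of S w "S i \<circ> id"] by (simp add: Sw_def)

lemma rw_snoc: "rw r (w @ [i]) = rw r w * r i"
  by (simp add: rw_def)

context
  fixes N :: nat and r :: "nat \<Rightarrow> real"
  assumes N: "N > 0" and r_bounds: "\<forall>i<N. 0 < r i \<and> r i < 1"
begin

lemma rw_pos: "set w \<subseteq> {..<N} \<Longrightarrow> 0 < rw r w"
  using r_bounds by (induction w) (auto simp: rw_def)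

lemma rw_le_max_power: "set w \<subseteq> {..<N} \<Longrightarrow> rw r w \<le> Max (r ` {..<N}) ^ length w"
proof (induction w)
  case (Cons i w)
  have "r i \<le> Max (r ` {..<N})"
    using Cons.prems by (intro Max_ge) auto
  moreover have "0 < r i"
    using Cons.prems r_bounds by auto
  ultimately have "r i * rw r w \<le> Max (r ` {..<N}) * Max (r ` {..<N}) ^ length w"
    using Cons rw_pos[of w] by (intro mult_mono) (auto intro: order.trans[OF less_imp_le])
  then show ?case
    by (simp add: rw_def)
qed (simp add: rw_def)

lemma rmin_bounds: "0 < rmin N r" "rmin N r < 1" "i < N \<Longrightarrow> rmin N r \<le> r i"
proof -
  have "rmin N r \<in> r ` {..<N}"
    unfolding rmin_def using N by (intro Min_in) auto
  then show "0 < rmin N r" "rmin N r < 1"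
    using r_bounds by auto
  show "i < N \<Longrightarrow> rmin N r \<le> r i"
    unfolding rmin_def by (intro Min_le) auto
qed

lemma Jlev_rw_bounds:
  assumes "x \<in> Jlev N r n"
  shows "set x \<subseteq> {..<N}" "rmin N r ^ Suc n < rw r x" "rw r x \<le> rmin N r ^ n"
proof -
  show "set x \<subseteq> {..<N}" "rw r x \<le> rmin N r ^ n"
    using assms by (auto simp: Jlev_def rw_def split: if_splits)
next
  show "rmin N r ^ Suc n < rw r x"
  proof (cases "n = 0")
    case True
    then show ?thesis
      using assms rmin_bounds by (simp add: Jlev_def rw_def)
  next
    case False
    with assms have x: "set x \<subseteq> {..<N}" "x \<noteq> []" "rmin N r ^ n < rw r (butlast x)"
      by (auto simp: Jlev_def)
    then have "last x < N"
      using last_in_set by blast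
    have "rmin N r ^ Suc n < rw r (butlast x) * rmin N r"
      using x(3) rmin_bounds(1) by (simp add: mult.commute)
    also have "\<dots> \<le> rw r (butlast x) * r (last x)"
      using \<open>last x < N\<close> rmin_bounds x(1) rw_pos[of "butlast x"] by (simp add: in_set_butlastD subset_iff)
    also have "\<dots> = rw r x"
      by (metis append_butlast_last_id rw_snoc x(2))
    finally show ?thesis .
  qed
qed

lemma Jlev_unique:
  assumes "x \<in> Jlev N r n" "x \<in> Jlev N r m"
  shows "n = m"
proof -
  have "rmin N r ^ Suc n < rmin N r ^ m" "rmin N r ^ Suc m < rmin N r ^ n"
    using Jlev_rw_bounds[OF assms(1)] Jlev_rw_bounds[OF assms(2)] by linarith+
  then have "m < Suc n" "n < Suc m"
    using rmin_bounds(1,2) power_strict_decreasing_iff by blast+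
  then show ?thesis
    by simp
qed

lemma level_eq:
  assumes "x \<in> Jlev N r n"
  shows "level N r x = n"
  unfolding level_def
proof (rule Least_equality)
  show "\<And>m. x \<in> Jlev N r m \<Longrightarrow> n \<le> m"
    using Jlev_unique[OF assms] by simp
qed (fact assms)

lemma Jlev_not_vedge:
  assumes "x \<in> Jlev N r n" "y \<in> Jlev N r n"
  shows "\<not> vedge N r x y"
proof
  assume "vedge N r x y"
  then obtain m where "m \<ge> 1" "x \<in> Jlev N r m" "y \<in> Jlev N r (m - 1)"
    by (auto simp: vedge_def)
  with assms have "m = n" "m - 1 = n"
    using Jlev_unique by blast+
  with \<open>m \<ge> 1\<close> show False
    by simp
qed

lemma first_small_word_in_Jlev:
  assumes "W 0 = []" "\<And>j. butlast (W (Suc j)) = W j" "\<And>j. W (Suc j) \<noteq> []"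
    and "\<And>k. set (W k) \<subseteq> {..<N}" and small: "rw r (W k) \<le> rmin N r ^ n"
  shows "W (LEAST k. rw r (W k) \<le> rmin N r ^ n) \<in> Jlev N r n"
proof -
  define k0 where "k0 = (LEAST k. rw r (W k) \<le> rmin N r ^ n)"
  have k0: "rw r (W k0) \<le> rmin N r ^ n"
    unfolding k0_def using small by (rule LeastI)
  show ?thesis
  proof (cases "n = 0")
    case True
    have "k0 \<le> 0"
      unfolding k0_def using assms(1) True by (intro Least_le) (simp add: rw_def)
    then show ?thesis
      using True assms(1) by (simp add: Jlev_def k0_def)
  next
    case False
    have "rmin N r ^ n < 1"
      using rmin_bounds False by (simp add: power_less_one_iff)
    then have "k0 \<noteq> 0"
      using k0 assms(1) by (metis rw_def list.map(1) prod_list.Nil not_less)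
    then obtain j where j: "k0 = Suc j"
      using not0_implies_Suc by blast
    have "\<not> rw r (W j) \<le> rmin N r ^ n"
      using not_less_Least[of j "\<lambda>k. rw r (W k) \<le> rmin N r ^ n"] j unfolding k0_def by simp
    then show ?thesis
      using False k0 j assms(2-4) by (simp add: Jlev_def k0_def)
  qed
qed

lemma base_cond_lower_bound:
  assumes "x \<in> Jlev N r n" "0 < lam"
  shows "min 1 (rmin N r powr \<alpha>) * (rmin N r powr \<alpha> / lam) ^ n \<le> base_cond N r \<alpha> lam x"
proof -
  define P where "P = rmin N r powr \<alpha>"
  have "0 < P"
    using rmin_bounds(1) by (simp add: P_def)
  have pow: "(rmin N r ^ k) powr \<alpha> = P ^ k" for k
    using rmin_bounds(1) by (induction k) (simp_all add: P_def powr_mult)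
  have rw: "rmin N r ^ Suc n < rw r x" "rw r x \<le> rmin N r ^ n"
    using Jlev_rw_bounds[OF assms(1)] by auto
  have "min 1 P * P ^ n \<le> rw r x powr \<alpha>"
  proof (cases "\<alpha> \<ge> 0")
    case True
    have "P ^ Suc n = (rmin N r ^ Suc n) powr \<alpha>"
      by (rule pow[symmetric])
    also have "\<dots> \<le> rw r x powr \<alpha>"
      using True rw(1) rmin_bounds(1) by (intro powr_mono2) auto
    finally have "P ^ Suc n \<le> rw r x powr \<alpha>" .
    moreover have "min 1 P * P ^ n \<le> P * P ^ n"
      using \<open>0 < P\<close> by (intro mult_right_mono) auto
    ultimately show ?thesis
      by simp
  next
    case False
    have "rw r x powr \<alpha> \<ge> (rmin N r ^ n) powr \<alpha>"
      using False rw rmin_bounds(1) by (intro powr_mono2') (auto intro: order.strict_trans[OF _ rw(1)])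
    then have "P ^ n \<le> rw r x powr \<alpha>"
      by (simp add: pow)
    moreover have "min 1 P * P ^ n \<le> P ^ n"
      using \<open>0 < P\<close> by (intro mult_left_le_one_le) auto
    ultimately show ?thesis
      by simp
  qed
  then show ?thesis
    using assms(2) unfolding base_cond_def level_eq[OF assms(1)]
    by (simp add: P_def power_divide divide_right_mono)
qed

lemma cond_hedge:
  assumes "x \<in> Jlev N r n" "hedge N r S K \<gamma> x y"
  shows "cond N r S K \<gamma> \<alpha> lam h x y = h x y"
proof -
  have "y \<in> Jlev N r n"
    using assms Jlev_unique unfolding hedge_def by blast
  then show ?thesis
    using assms Jlev_not_vedge by (simp add: cond_def)
qed

text \<open>Edges are indexed by the level of their first vertex, which for a vertical edge is the child.\<close>

lemma cond_lower_bound: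
  assumes "0 < lam" "admissible_hcond N r S K \<gamma> \<alpha> lam h"
  obtains c where "0 < c"
    "\<And>n x y. x \<in> Jlev N r n \<Longrightarrow> vedge N r x y \<or> hedge N r S K \<gamma> x y \<Longrightarrow>
       c * (rmin N r powr \<alpha> / lam) ^ n \<le> cond N r S K \<gamma> \<alpha> lam h x y"
proof -
  define m where "m = min 1 (rmin N r powr \<alpha>)"
  obtain C where "C > 0" and h: "\<And>x y. hedge N r S K \<gamma> x y \<Longrightarrow> base_cond N r \<alpha> lam x / C \<le> h x y"
    using assms(2) unfolding admissible_hcond_def by blast
  show ?thesis
  proof (rule that)
    show "0 < m / max 1 C"
      using rmin_bounds(1) by (simp add: m_def)
    fix n x y
    assume x: "x \<in> Jlev N r n" and edge: "vedge N r x y \<or> hedge N r S K \<gamma> x y"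
    have base_nonneg: "0 \<le> base_cond N r \<alpha> lam x"
      using assms(1) by (simp add: base_cond_def)
    have "m / max 1 C * (rmin N r powr \<alpha> / lam) ^ n \<le> base_cond N r \<alpha> lam x / max 1 C"
      using base_cond_lower_bound[OF x assms(1)] by (simp add: m_def divide_right_mono)
    also have "\<dots> \<le> cond N r S K \<gamma> \<alpha> lam h x y"
    proof (cases "vedge N r x y")
      case True
      have "base_cond N r \<alpha> lam x * 1 \<le> base_cond N r \<alpha> lam x * max 1 C"
        using base_nonneg by (intro mult_left_mono) auto
      with True show ?thesis
        by (simp add: cond_def divide_le_eq)
    next
      case False
      with edge have "hedge N r S K \<gamma> x y"
        by simp
      moreover have "base_cond N r \<alpha> lam x / max 1 C \<le> base_cond N r \<alpha> lam x / C"
        using \<open>C > 0\<close> base_nonneg by (intro divide_left_mono) auto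
      ultimately show ?thesis
        using h cond_hedge[OF x] by fastforce
    qed
    finally show "m / max 1 C * (rmin N r powr \<alpha> / lam) ^ n \<le> cond N r S K \<gamma> \<alpha> lam h x y" .
  qed
qed

lemma energy_increment_decay:
  assumes "0 < lam" "lam < rmin N r powr \<alpha>" "admissible_hcond N r S K \<gamma> \<alpha> lam h"
    and finite: "energy N r S K \<gamma> \<alpha> lam h f < \<infinity>"
  obtains B s where "0 \<le> B" "0 \<le> s" "s < 1"
    "\<And>n x y. x \<in> Jlev N r n \<Longrightarrow> vedge N r x y \<or> hedge N r S K \<gamma> x y \<Longrightarrow>
       \<bar>f x - f y\<bar> \<le> B * s ^ n"
proof -
  define \<rho> where "\<rho> = rmin N r powr \<alpha> / lam"
  define E where "E = enn2real (energy N r S K \<gamma> \<alpha> lam h f)"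
  obtain c where "0 < c" and c: "\<And>n x y. x \<in> Jlev N r n \<Longrightarrow> vedge N r x y \<or> hedge N r S K \<gamma> x y \<Longrightarrow>
       c * \<rho> ^ n \<le> cond N r S K \<gamma> \<alpha> lam h x y"
    using cond_lower_bound[OF assms(1,3)] unfolding \<rho>_def by blast
  have "1 < \<rho>"
    using assms(1,2) by (simp add: \<rho>_def)
  show ?thesis
  proof (rule that)
    show "0 \<le> sqrt (2 * E / c)" "0 \<le> sqrt (1 / \<rho>)" "sqrt (1 / \<rho>) < 1"
      using \<open>0 < c\<close> \<open>1 < \<rho>\<close> by (auto simp: E_def)
    fix n x y
    assume x: "x \<in> Jlev N r n" and edge: "vedge N r x y \<or> hedge N r S K \<gamma> x y"
    then have "adj N r S K \<gamma> x y"
      by (auto simp: adj_def)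
    then have "\<bar>f x - f y\<bar> \<le> sqrt (2 * E / (c * \<rho> ^ n))"
      unfolding E_def using \<open>0 < c\<close> \<open>1 < \<rho>\<close>
      by (intro increment_le_sqrt_energy[OF _ finite _ c[OF x edge]]) auto
    also have "2 * E / (c * \<rho> ^ n) = 2 * E / c * (1 / \<rho>) ^ n"
      by (simp add: power_one_over)
    also have "sqrt \<dots> = sqrt (2 * E / c) * sqrt (1 / \<rho>) ^ n"
      by (simp only: real_sqrt_mult real_sqrt_power)
    finally show "\<bar>f x - f y\<bar> \<le> sqrt (2 * E / c) * sqrt (1 / \<rho>) ^ n" .
  qed
qed

end

primrec address :: "nat \<Rightarrow> (nat \<Rightarrow> 'a \<Rightarrow> 'a) \<Rightarrow> 'a set \<Rightarrow> 'a \<Rightarrow> nat \<Rightarrow> nat list" where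
  "address N S K \<xi> 0 = []"
| "address N S K \<xi> (Suc k) =
     address N S K \<xi> k @ [SOME i. i < N \<and> \<xi> \<in> Sw S (address N S K \<xi> k @ [i]) ` K]"

lemma address_mem_cell:
  assumes "K = (\<Union>i<N. S i ` K)" "\<xi> \<in> K"
  shows "set (address N S K \<xi> k) \<subseteq> {..<N} \<and> \<xi> \<in> Sw S (address N S K \<xi> k) ` K"
proof (induction k)
  case 0
  then show ?case
    using assms(2) by (simp add: Sw_def)
next
  case (Suc k)
  define w where "w = address N S K \<xi> k"
  from Suc obtain p where p: "p \<in> K" "\<xi> = Sw S w p"
    by (auto simp: w_def)
  have "p \<in> (\<Union>i<N. S i ` K)"
    using p(1) assms(1) by simp
  then obtain i q where "i < N" "q \<in> K" "p = S i q"
    by blast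
  then have "\<exists>i. i < N \<and> \<xi> \<in> Sw S (w @ [i]) ` K"
    using p by (auto simp: Sw_snoc)
  from someI_ex[OF this] show ?case
    using Suc by (simp add: w_def)
qed

lemma address_prefix: "k \<le> k' \<Longrightarrow> prefix (address N S K \<xi> k) (address N S K \<xi> k')"
proof (induction k' rule: dec_induct)
  case (step m)
  then show ?case
    by (simp add: prefix_append)
qed simp

lemma geodesic_ray_exists:
  assumes N: "N > 0" and r_bounds: "\<forall>i<N. 0 < r i \<and> r i < 1"
    and K: "K = (\<Union>i<N. S i ` K)" and "\<xi> \<in> K"
  shows "\<exists>xs. geodesic_ray N r S K xs \<xi>"
proof -
  define W where "W = address N S K \<xi>"
  define R where "R = Max (r ` {..<N})"
  define cut where "cut n = (LEAST k. rw r (W k) \<le> rmin N r ^ n)" for n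
  note rmin = rmin_bounds[OF N r_bounds]
  have W: "set (W k) \<subseteq> {..<N}" "\<xi> \<in> Sw S (W k) ` K" for k
    unfolding W_def using address_mem_cell[OF K \<open>\<xi> \<in> K\<close>] by blast+
  have "R \<in> r ` {..<N}"
    unfolding R_def using N by (intro Max_in) auto
  then have "R < 1"
    using r_bounds by auto
  have small: "\<exists>k. rw r (W k) \<le> rmin N r ^ n" for n
  proof -
    obtain k where "R ^ k < rmin N r ^ n"
      using real_arch_pow_inv[OF zero_less_power[OF rmin(1)] \<open>R < 1\<close>] by blast
    moreover have "length (W k) = k"
      unfolding W_def by (induction k) auto
    ultimately show ?thesis
      using rw_le_max_power[OF N r_bounds W(1)] unfolding R_def by (metis less_imp_le order.trans)
  qed
  have W_grows: "W 0 = []" "butlast (W (Suc j)) = W j" "W (Suc j) \<noteq> []" for j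
    by (simp_all add: W_def)
  have cut_in_Jlev: "W (cut n) \<in> Jlev N r n" for n
  proof -
    obtain k where "rw r (W k) \<le> rmin N r ^ n"
      using small by blast
    then show ?thesis
      unfolding cut_def by (rule first_small_word_in_Jlev[OF N r_bounds W_grows W(1)])
  qed
  have "cut n \<le> cut (Suc n)" for n
  proof -
    have "rmin N r ^ Suc n \<le> rmin N r ^ n"
      using rmin(1,2) by (intro power_decreasing) auto
    then have "rw r (W (cut (Suc n))) \<le> rmin N r ^ n"
      using Jlev_rw_bounds(3)[OF N r_bounds cut_in_Jlev[of "Suc n"]] by linarith
    then show ?thesis
      unfolding cut_def[of n] by (rule Least_le)
  qed
  then have "geodesic_ray N r S K (\<lambda>n. W (cut n)) \<xi>"
    unfolding geodesic_ray_def using cut_in_Jlev W(2) by (simp add: W_def address_prefix)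
  then show ?thesis
    by blast
qed

lemma hedge_if_cells_close:
  assumes "x \<in> Jlev N r n" "y \<in> Jlev N r n" "x \<noteq> y"
    and "\<xi> \<in> Sw S x ` K" "\<eta> \<in> Sw S y ` K" "dist \<xi> \<eta> \<le> \<gamma> * rmin N r ^ n"
  shows "hedge N r S K \<gamma> x y"
proof -
  obtain p q where pq: "p \<in> K" "q \<in> K" "\<xi> = Sw S x p" "\<eta> = Sw S y q"
    using assms(4,5) by blast
  have "(INF u \<in> K \<times> K. dist (Sw S x (fst u)) (Sw S y (snd u)))
      \<le> dist (Sw S x (fst (p, q))) (Sw S y (snd (p, q)))"
    using pq by (intro cINF_lower) (auto intro!: bdd_belowI[of _ 0])
  then have "(INF u \<in> K \<times> K. dist (Sw S x (fst u)) (Sw S y (snd u))) \<le> \<gamma> * rmin N r ^ n"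
    using assms(6) pq by simp
  then show ?thesis
    unfolding hedge_def using assms(1-3) by blast
qed

lemma ray_vertices_increment_le:
  fixes f :: "nat list \<Rightarrow> real"
  assumes "geodesic_ray N r S K X \<xi>" "geodesic_ray N r S K Y \<eta>" "dist \<xi> \<eta> \<le> \<gamma> * rmin N r ^ n"
    and decay: "\<And>x y. x \<in> Jlev N r n \<Longrightarrow> hedge N r S K \<gamma> x y \<Longrightarrow> \<bar>f x - f y\<bar> \<le> b" and "0 \<le> b"
  shows "\<bar>f (X n) - f (Y n)\<bar> \<le> b"
proof (cases "X n = Y n")
  case False
  with assms(1-3) have "hedge N r S K \<gamma> (X n) (Y n)"
    unfolding geodesic_ray_def by (intro hedge_if_cells_close) auto
  with assms(1) show ?thesis
    unfolding geodesic_ray_def by (intro decay) auto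
qed (use assms(5) in simp)

lemma trace_approximation:
  assumes ray: "geodesic_ray N r S K xs \<xi>"
    and decay: "\<And>n x y. x \<in> Jlev N r n \<Longrightarrow> vedge N r x y \<Longrightarrow> \<bar>f x - f y\<bar> \<le> B * s ^ n"
    and "0 \<le> B" "0 \<le> s" "s < 1"
  shows "\<bar>trace N r S K f \<xi> - f ((SOME xs. geodesic_ray N r S K xs \<xi>) n)\<bar> \<le> B * s ^ n / (1 - s)"
proof -
  define X where "X = (SOME xs. geodesic_ray N r S K xs \<xi>)"
  have X: "geodesic_ray N r S K X \<xi>"
    unfolding X_def using ray by (rule someI[of "\<lambda>xs. geodesic_ray N r S K xs \<xi>"])
  have "\<bar>f (X (Suc n)) - f (X n)\<bar> \<le> B * s ^ n" for n
  proof -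
    have "X (Suc n) \<in> Jlev N r (Suc n)" "vedge N r (X (Suc n)) (X n)"
      using X unfolding geodesic_ray_def vedge_def by (auto intro!: exI[of _ "Suc n"])
    then have "\<bar>f (X (Suc n)) - f (X n)\<bar> \<le> B * s ^ Suc n"
      by (rule decay)
    also have "\<dots> \<le> B * s ^ n"
      using assms(3-5) by (intro mult_left_mono power_decreasing) auto
    finally show ?thesis .
  qed
  from geometric_increments_limit(2)[OF this assms(4,5)] show ?thesis
    by (simp add: trace_def X_def)
qed

theorem lemma3p4:
  fixes N :: nat and S :: "nat \<Rightarrow> 'a::euclidean_space \<Rightarrow> 'a" and r :: "nat \<Rightarrow> real"
    and K :: "'a set" and \<gamma> lam :: real
    and h :: "nat list \<Rightarrow> nat list \<Rightarrow> real" and f :: "nat list \<Rightarrow> real"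
  assumes "N \<ge> 2"
    and "\<forall>i<N. 0 < r i \<and> r i < 1 \<and> similitude (S i) (r i)"
    and "open_set_condition N S"
    and "self_similar_set N S K"
    and "\<gamma> > 0"
    and "0 < lam" and "lam < rmin N r powr hausdorff_dim K"
    and "admissible_hcond N r S K \<gamma> (hausdorff_dim K) lam h"
    and "energy N r S K \<gamma> (hausdorff_dim K) lam h f < \<infinity>"
  shows "continuous_on K (trace N r S K f)"
proof -
  have N: "N > 0" and r_bounds: "\<forall>i<N. 0 < r i \<and> r i < 1" and K: "K = (\<Union>i<N. S i ` K)"
    using assms(1,2,4) by (auto simp: self_similar_set_def)
  obtain B s where "0 \<le> B" "0 \<le> s" "s < 1" and decay: "\<And>n x y. x \<in> Jlev N r n \<Longrightarrow>
      vedge N r x y \<or> hedge N r S K \<gamma> x y \<Longrightarrow> \<bar>f x - f y\<bar> \<le> B * s ^ n"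
    using energy_increment_decay[OF N r_bounds assms(6-9)] by blast
  define ray where "ray \<xi> = (SOME xs. geodesic_ray N r S K xs \<xi>)" for \<xi>
  have ray: "geodesic_ray N r S K (ray \<xi>) \<xi>" if "\<xi> \<in> K" for \<xi>
    unfolding ray_def using geodesic_ray_exists[OF N r_bounds K that] by (rule someI_ex)
  have "\<bar>f (ray \<xi> n) - f (ray \<eta> n)\<bar> \<le> B * s ^ n"
    if "\<xi> \<in> K" "\<eta> \<in> K" "dist \<xi> \<eta> < \<gamma> * rmin N r ^ n" for \<xi> \<eta> n
    using \<open>0 \<le> B\<close> \<open>0 \<le> s\<close> by (intro ray_vertices_increment_le[OF ray[OF that(1)] ray[OF that(2)]
          less_imp_le[OF that(3)] decay[OF _ disjI2]]) auto
  moreover have "\<bar>trace N r S K f \<xi> - f (ray \<xi> n)\<bar> \<le> B * s ^ n / (1 - s)" if "\<xi> \<in> K" for \<xi> n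
    using trace_approximation[OF ray[OF that] decay[OF _ disjI1] \<open>0 \<le> B\<close> \<open>0 \<le> s\<close> \<open>s < 1\<close>]
    by (simp add: ray_def)
  moreover have "(\<lambda>n. B * s ^ n) \<longlonglongrightarrow> 0"
    using \<open>0 \<le> s\<close> \<open>s < 1\<close> by (intro tendsto_mult_right_zero LIMSEQ_power_zero) simp
  moreover have "0 < \<gamma> * rmin N r ^ n" for n
    using assms(5) rmin_bounds(1)[OF N r_bounds] by simp
  ultimately have "uniformly_continuous_on K (trace N r S K f)"
    using \<open>s < 1\<close> by (intro uniformly_continuous_on_if_approximable[where M = "1 / (1 - s)"]) auto
  then show ?thesis
    by (rule uniformly_continuous_imp_continuous)
qed

end
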